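(* Let $T$ be one of $\mathrm{DLO}$, $\mathrm{DOAG}$, $\mathrm{RCF}$, let $\boldsymbol{M}$ be a model of $T$, and let $x,y$ be finite tuples of variables. Every Boolean combination (inside $\boldsymbol{M}^{(x,y)}$) of finitely many special stable subsets of $\boldsymbol{M}^{(x;y)}$ is a finite union of special stable subsets of $\boldsymbol{M}^{(x;y)}$.
   Context: $\mathrm{DLO}=\mathrm{Th}(\mathbb{R},<)$ (dense linear orders without endpoints) in the language $\{<\}$, $\mathrm{DOAG}=\mathrm{Th}(\mathbb{R},+,<)$ (divisible ordered abelian groups) in the language $\{+,<\}$ (with the usual constants/inverse as appropriate), $\mathrm{RCF}=\mathrm{Th}(\mathbb{R},+,\cdot,<)$ (real closed fields) in the ordered ring language; "definable" means definable with parameters from $\boldsymbol{M}$. $\boldsymbol{M}^{x}$ is the cartesian power of $\boldsymbol{M}$ indexed by the variables of $x$, and $\boldsymbol{M}^{(x;y)}$ denotes $\boldsymbol{M}^{(x,y)}$ with the fixed division of variables $(x;y)$. A set is equationally definable if it is defined by a Boolean combination of atomic formulas with parameters from $\boldsymbol{M}$ that do not involve the symbol $<$. A definable set $D\subseteq\boldsymbol{M}^{(x;y)}$ is special stable (with respect to $(x;y)$) if there are definable sets $X\subseteq \boldsymbol{M}^x$, $Y\subseteq\boldsymbol{M}^y$ and an equationally definable set $Z\subseteq\boldsymbol{M}^{(x;y)}$ with $D=Z\cap(X\times Y)$. *)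

theory Defs
  imports Main "HOL.Real"
begin

text \<open>First-order syntax for the ordered-ring language and its sublanguages.
  Constants C c are parameters from the model; variables are indexed by nat.\<close>

datatype 'a trm = V nat | C 'a | Zr | On | Ng "'a trm" | Pl "'a trm" "'a trm" | Ml "'a trm" "'a trm"

datatype 'a fm = FF | Eq "'a trm" "'a trm" | Lt "'a trm" "'a trm"
  | Neg "'a fm" | Conj "'a fm" "'a fm" | Ex nat "'a fm"

datatype thy = DLO | DOAG | RCF

fun trm_ok :: "thy \<Rightarrow> 'a trm \<Rightarrow> bool" where
  "trm_ok T (V i) = True"
| "trm_ok T (C c) = True"
| "trm_ok T Zr = (T \<noteq> DLO)"
| "trm_ok T On = (T = RCF)"
| "trm_ok T (Ng s) = (T \<noteq> DLO \<and> trm_ok T s)"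
| "trm_ok T (Pl s t) = (T \<noteq> DLO \<and> trm_ok T s \<and> trm_ok T t)"
| "trm_ok T (Ml s t) = (T = RCF \<and> trm_ok T s \<and> trm_ok T t)"

fun fm_ok :: "thy \<Rightarrow> 'a fm \<Rightarrow> bool" where
  "fm_ok T FF = True"
| "fm_ok T (Eq s t) = (trm_ok T s \<and> trm_ok T t)"
| "fm_ok T (Lt s t) = (trm_ok T s \<and> trm_ok T t)"
| "fm_ok T (Neg p) = fm_ok T p"
| "fm_ok T (Conj p q) = (fm_ok T p \<and> fm_ok T q)"
| "fm_ok T (Ex n p) = fm_ok T p"

fun qf_eq :: "thy \<Rightarrow> 'a fm \<Rightarrow> bool" where
  "qf_eq T FF = True"
| "qf_eq T (Eq s t) = (trm_ok T s \<and> trm_ok T t)"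
| "qf_eq T (Lt s t) = False"
| "qf_eq T (Neg p) = qf_eq T p"
| "qf_eq T (Conj p q) = (qf_eq T p \<and> qf_eq T q)"
| "qf_eq T (Ex n p) = False"

fun tvars :: "'a trm \<Rightarrow> nat set" where
  "tvars (V i) = {i}"
| "tvars (C c) = {}"
| "tvars Zr = {}"
| "tvars On = {}"
| "tvars (Ng s) = tvars s"
| "tvars (Pl s t) = tvars s \<union> tvars t"
| "tvars (Ml s t) = tvars s \<union> tvars t"

fun fv :: "'a fm \<Rightarrow> nat set" where
  "fv FF = {}"
| "fv (Eq s t) = tvars s \<union> tvars t"
| "fv (Lt s t) = tvars s \<union> tvars t"
| "fv (Neg p) = fv p"
| "fv (Conj p q) = fv p \<union> fv q"
| "fv (Ex n p) = fv p - {n}"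

text \<open>A structure for the ordered ring language (symbols outside the language
  of the theory under consideration are simply ignored).\<close>
record 'a str =
  s_zero :: 'a
  s_one :: 'a
  s_neg :: "'a \<Rightarrow> 'a"
  s_add :: "'a \<Rightarrow> 'a \<Rightarrow> 'a"
  s_mul :: "'a \<Rightarrow> 'a \<Rightarrow> 'a"
  s_less :: "'a \<Rightarrow> 'a \<Rightarrow> bool"

fun ev :: "('a, 'b) str_scheme \<Rightarrow> 'a trm \<Rightarrow> (nat \<Rightarrow> 'a) \<Rightarrow> 'a" where
  "ev S (V i) e = e i"
| "ev S (C c) e = c"
| "ev S Zr e = s_zero S"
| "ev S On e = s_one S"
| "ev S (Ng s) e = s_neg S (ev S s e)"
| "ev S (Pl s t) e = s_add S (ev S s e) (ev S t e)"
| "ev S (Ml s t) e = s_mul S (ev S s e) (ev S t e)"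

fun sat :: "('a, 'b) str_scheme \<Rightarrow> 'a fm \<Rightarrow> (nat \<Rightarrow> 'a) \<Rightarrow> bool" where
  "sat S FF e = False"
| "sat S (Eq s t) e = (ev S s e = ev S t e)"
| "sat S (Lt s t) e = s_less S (ev S s e) (ev S t e)"
| "sat S (Neg p) e = (\<not> sat S p e)"
| "sat S (Conj p q) e = (sat S p e \<and> sat S q e)"
| "sat S (Ex n p) e = (\<exists>a. sat S p (e(n := a)))"

definition realS :: "real str" where
  "realS = \<lparr>s_zero = 0, s_one = 1, s_neg = uminus, s_add = (+), s_mul = (*), s_less = (<)\<rparr>"

text \<open>S is a model of T = Th(R, ...) in the language of T: S satisfies exactly the
  sentences (no free variables, no parameters) of that language true in the reals.\<close>
definition is_model :: "thy \<Rightarrow> 'a str \<Rightarrow> bool" where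
  "is_model T S \<longleftrightarrow> (\<forall>\<phi> :: 'a fm. fm_ok T \<phi> \<and> fv \<phi> = {} \<and> set_fm \<phi> = {} \<longrightarrow>
      (sat S \<phi> (\<lambda>_. undefined) \<longleftrightarrow> sat realS (map_fm (\<lambda>_. 0) \<phi>) (\<lambda>_. 0)))"

definition lenv :: "'a list \<Rightarrow> nat \<Rightarrow> 'a" where
  "lenv xs i = (if i < length xs then xs ! i else undefined)"

text \<open>M^x with x = (v_0,...,v_{n-1}) is represented by lists of length n.\<close>
definition definable :: "thy \<Rightarrow> 'a str \<Rightarrow> nat \<Rightarrow> 'a list set \<Rightarrow> bool" where
  "definable T S n A \<longleftrightarrow> (\<exists>\<phi>. fm_ok T \<phi> \<and> fv \<phi> \<subseteq> {..<n} \<and>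
      A = {a. length a = n \<and> sat S \<phi> (lenv a)})"

text \<open>Subsets of M^(x;y), x of length n (variables 0..n-1), y of length m
  (variables n..n+m-1), represented as sets of pairs of lists.\<close>
definition tuples :: "nat \<Rightarrow> nat \<Rightarrow> ('a list \<times> 'a list) set" where
  "tuples n m = {(a, b). length a = n \<and> length b = m}"

definition eq_definable :: "thy \<Rightarrow> 'a str \<Rightarrow> nat \<Rightarrow> nat \<Rightarrow> ('a list \<times> 'a list) set \<Rightarrow> bool" where
  "eq_definable T S n m Z \<longleftrightarrow> (\<exists>\<phi>. qf_eq T \<phi> \<and> fv \<phi> \<subseteq> {..<n+m} \<and>
      Z = {(a, b). length a = n \<and> length b = m \<and> sat S \<phi> (lenv (a @ b))})"

definition special_stable :: "thy \<Rightarrow> 'a str \<Rightarrow> nat \<Rightarrow> nat \<Rightarrow> ('a list \<times> 'a list) set \<Rightarrow> bool" where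
  "special_stable T S n m D \<longleftrightarrow> (\<exists>X Y Z. definable T S n X \<and> definable T S m Y \<and>
      eq_definable T S n m Z \<and> D = Z \<inter> (X \<times> Y))"

inductive_set bool_comb :: "'b set \<Rightarrow> 'b set set \<Rightarrow> 'b set set" for U F where
  bc_base: "A \<in> F \<Longrightarrow> A \<in> bool_comb U F"
| bc_univ: "U \<in> bool_comb U F"
| bc_compl: "A \<in> bool_comb U F \<Longrightarrow> U - A \<in> bool_comb U F"
| bc_int: "A \<in> bool_comb U F \<Longrightarrow> B \<in> bool_comb U F \<Longrightarrow> A \<inter> B \<in> bool_comb U F"
| bc_un: "A \<in> bool_comb U F \<Longrightarrow> B \<in> bool_comb U F \<Longrightarrow> A \<union> B \<in> bool_comb U F"

end

theory Submission
  imports Defs "HOL-Library.Set_Idioms"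
begin

text \<open>Special stable sets are closed under intersection, and the complement of
  \<open>Z \<inter> (X \<times> Y)\<close> is the union of the three special stable sets \<open>Z\<^sup>c\<close>, \<open>X\<^sup>c \<times> M\<^sup>y\<close>
  and \<open>M\<^sup>x \<times> Y\<^sup>c\<close>. For any family of sets closed under intersection whose complements
  are finite unions of members, the finite unions of members form a Boolean algebra,
  since by distributivity they are again closed under intersection and complement.
  No property of the theory or of the model is used.\<close>

lemma finite_union_of_Int:
  assumes "\<And>A B. P A \<Longrightarrow> P B \<Longrightarrow> P (A \<inter> B)"
    and "(finite union_of P) S" and "(finite union_of P) S'"
  shows "(finite union_of P) (S \<inter> S')"
  using finite_union_of_Int_eq[of P] assms by (metis finite_union_of_inc)

lemma finite_union_of_Diff:
  assumes top: "P U"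
    and Int: "\<And>A B. P A \<Longrightarrow> P B \<Longrightarrow> P (A \<inter> B)"
    and Diff: "\<And>A. P A \<Longrightarrow> (finite union_of P) (U - A)"
    and "(finite union_of P) S"
  shows "(finite union_of P) (U - S)"
proof -
  obtain G where "finite G" "G \<subseteq> Collect P" "S = \<Union>G"
    using \<open>(finite union_of P) S\<close> unfolding union_of_def by blast
  then show ?thesis
  proof (induction G arbitrary: S rule: finite_induct)
    case empty
    then show ?case using top by (simp add: finite_union_of_inc)
  next
    case (insert A G)
    have "U - S = (U - A) \<inter> (U - \<Union>G)"
      using insert.prems by auto
    then show ?case
      using insert Diff Int by (simp add: finite_union_of_Int)
  qed
qed

lemma bool_comb_finite_union_of:
  assumes "B \<in> bool_comb U F"
    and base: "\<And>A. A \<in> F \<Longrightarrow> P A"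
    and top: "P U"
    and Int: "\<And>A B. P A \<Longrightarrow> P B \<Longrightarrow> P (A \<inter> B)"
    and Diff: "\<And>A. P A \<Longrightarrow> (finite union_of P) (U - A)"
  shows "(finite union_of P) B"
  using \<open>B \<in> bool_comb U F\<close>
proof induction
  case (bc_base A)
  then show ?case by (simp add: base finite_union_of_inc)
next
  case bc_univ
  then show ?case by (simp add: top finite_union_of_inc)
next
  case (bc_compl A)
  then show ?case using finite_union_of_Diff[OF top Int Diff] by blast
next
  case (bc_int A B)
  then show ?case by (simp add: Int finite_union_of_Int)
next
  case (bc_un A B)
  then show ?case by (simp add: finite_union_of_Un)
qed

lemma definable_lists: "definable T S n {a. length a = n}"
  unfolding definable_def by (rule exI[of _ "Neg FF"]) auto

lemma definable_Diff:
  assumes "definable T S n X"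
  shows "definable T S n ({a. length a = n} - X)"
proof -
  obtain \<phi> where "fm_ok T \<phi>" "fv \<phi> \<subseteq> {..<n}" "X = {a. length a = n \<and> sat S \<phi> (lenv a)}"
    using assms unfolding definable_def by blast
  then show ?thesis
    unfolding definable_def by (intro exI[of _ "Neg \<phi>"]) auto
qed

lemma definable_Int:
  assumes "definable T S n X" and "definable T S n X'"
  shows "definable T S n (X \<inter> X')"
proof -
  obtain \<phi> \<psi> where "fm_ok T \<phi>" "fv \<phi> \<subseteq> {..<n}" "X = {a. length a = n \<and> sat S \<phi> (lenv a)}"
    and "fm_ok T \<psi>" "fv \<psi> \<subseteq> {..<n}" "X' = {a. length a = n \<and> sat S \<psi> (lenv a)}"
    using assms unfolding definable_def by blast
  then show ?thesis
    unfolding definable_def by (intro exI[of _ "Conj \<phi> \<psi>"]) auto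
qed

lemma definable_subset_lists: "definable T S n X \<Longrightarrow> X \<subseteq> {a. length a = n}"
  unfolding definable_def by auto

lemma eq_definable_tuples: "eq_definable T S n m (tuples n m)"
  unfolding eq_definable_def tuples_def by (rule exI[of _ "Neg FF"]) auto

lemma eq_definable_Diff:
  assumes "eq_definable T S n m Z"
  shows "eq_definable T S n m (tuples n m - Z)"
proof -
  obtain \<phi> where "qf_eq T \<phi>" "fv \<phi> \<subseteq> {..<n+m}"
    "Z = {(a, b). length a = n \<and> length b = m \<and> sat S \<phi> (lenv (a @ b))}"
    using assms unfolding eq_definable_def by blast
  then show ?thesis
    unfolding eq_definable_def tuples_def by (intro exI[of _ "Neg \<phi>"]) auto
qed

lemma eq_definable_Int:
  assumes "eq_definable T S n m Z" and "eq_definable T S n m Z'"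
  shows "eq_definable T S n m (Z \<inter> Z')"
proof -
  obtain \<phi> \<psi> where "qf_eq T \<phi>" "fv \<phi> \<subseteq> {..<n+m}"
    "Z = {(a, b). length a = n \<and> length b = m \<and> sat S \<phi> (lenv (a @ b))}"
    and "qf_eq T \<psi>" "fv \<psi> \<subseteq> {..<n+m}"
    "Z' = {(a, b). length a = n \<and> length b = m \<and> sat S \<psi> (lenv (a @ b))}"
    using assms unfolding eq_definable_def by blast
  then show ?thesis
    unfolding eq_definable_def by (intro exI[of _ "Conj \<phi> \<psi>"]) auto
qed

lemma eq_definable_subset_tuples: "eq_definable T S n m Z \<Longrightarrow> Z \<subseteq> tuples n m"
  unfolding eq_definable_def tuples_def by auto

lemma special_stable_eq_definable:
  assumes "eq_definable T S n m Z"
  shows "special_stable T S n m Z"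
proof -
  have "Z = Z \<inter> ({a. length a = n} \<times> {b. length b = m})"
    using eq_definable_subset_tuples[OF assms] by (auto simp: tuples_def)
  then show ?thesis
    unfolding special_stable_def using assms definable_lists by blast
qed

lemma special_stable_Times:
  assumes "definable T S n X" and "definable T S m Y"
  shows "special_stable T S n m (X \<times> Y)"
proof -
  have "X \<times> Y = tuples n m \<inter> (X \<times> Y)"
    using assms by (auto simp: tuples_def dest!: definable_subset_lists)
  then show ?thesis
    unfolding special_stable_def using assms eq_definable_tuples by blast
qed

lemma special_stable_tuples: "special_stable T S n m (tuples n m)"
  by (rule special_stable_eq_definable[OF eq_definable_tuples])

lemma special_stable_Int:
  assumes "special_stable T S n m D" and "special_stable T S n m D'"
  shows "special_stable T S n m (D \<inter> D')"
proof -
  obtain X Y Z X' Y' Z' where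
    "definable T S n X" "definable T S m Y" "eq_definable T S n m Z" "D = Z \<inter> (X \<times> Y)"
    "definable T S n X'" "definable T S m Y'" "eq_definable T S n m Z'" "D' = Z' \<inter> (X' \<times> Y')"
    using assms unfolding special_stable_def by metis
  moreover have "D \<inter> D' = (Z \<inter> Z') \<inter> ((X \<inter> X') \<times> (Y \<inter> Y'))"
    using calculation by auto
  ultimately show ?thesis
    unfolding special_stable_def by (meson definable_Int eq_definable_Int)
qed

lemma Diff_special_stable:
  assumes "special_stable T S n m D"
  shows "(finite union_of special_stable T S n m) (tuples n m - D)"
proof -
  let ?Ln = "{a :: 'a list. length a = n}" and ?Lm = "{b :: 'a list. length b = m}"
  obtain X Y Z where X: "definable T S n X" and Y: "definable T S m Y"
    and Z: "eq_definable T S n m Z" and D: "D = Z \<inter> (X \<times> Y)"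
    using assms unfolding special_stable_def by blast
  have "tuples n m - D = (tuples n m - Z) \<union> ((?Ln - X) \<times> ?Lm) \<union> (?Ln \<times> (?Lm - Y))"
    using definable_subset_lists[OF X] definable_subset_lists[OF Y]
      eq_definable_subset_tuples[OF Z]
    unfolding D tuples_def by auto
  moreover have "special_stable T S n m (tuples n m - Z)"
    by (rule special_stable_eq_definable[OF eq_definable_Diff[OF Z]])
  moreover have "special_stable T S n m ((?Ln - X) \<times> ?Lm)"
    by (intro special_stable_Times definable_Diff X definable_lists)
  moreover have "special_stable T S n m (?Ln \<times> (?Lm - Y))"
    by (intro special_stable_Times definable_Diff Y definable_lists)
  ultimately show ?thesis
    by (metis finite_union_of_Un finite_union_of_inc)
qed

theorem lemma2p2:
  fixes T :: thy and S :: "'a str" and n m :: nat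
    and F :: "('a list \<times> 'a list) set set"
  assumes "is_model T S"
    and "finite F"
    and "\<forall>D\<in>F. special_stable T S n m D"
  shows "\<forall>B \<in> bool_comb (tuples n m) F. \<exists>G. finite G \<and>
           (\<forall>D\<in>G. special_stable T S n m D) \<and> B = \<Union>G"
proof
  fix B
  assume "B \<in> bool_comb (tuples n m) F"
  then have "(finite union_of special_stable T S n m) B"
    by (rule bool_comb_finite_union_of)
      (use assms(3) special_stable_tuples special_stable_Int Diff_special_stable in auto)
  then show "\<exists>G. finite G \<and> (\<forall>D\<in>G. special_stable T S n m D) \<and> B = \<Union>G"
    unfolding union_of_def by auto
qed

end
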